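(* For any $\lambda>0$ and $n\ge 1$, $Z=\sum_{\sigma\in\Omega}\lambda^{-p(\sigma)}\geq(\sqrt{2}/\lambda)^{p_{max}}$, where $p_{max}=2n-2$.
   Context: Let $\Gamma$ be the triangular lattice. A configuration of $n$ particles is a set of $n$ vertices of $\Gamma$, considered up to translation. It is connected if the subgraph of $\Gamma$ induced by occupied vertices is connected; a hole is a maximal finite connected set of unoccupied vertices; $\Omega$ is the set of connected configurations of $n$ particles with no holes. For $\sigma\in\Omega$, $p(\sigma)$ is the length of the closed walk around its single external boundary, with an edge traversed twice counted twice. *)

theory Defs
  imports Complex_Main
begin

type_synonym vtx = "int \<times> int"

definition padd :: "vtx \<Rightarrow> vtx \<Rightarrow> vtx" where
  "padd u v = (fst u + fst v, snd u + snd v)"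

text \<open>The six unit directions of the triangular lattice, in counterclockwise order.\<close>
definition dir :: "nat \<Rightarrow> vtx" where
  "dir i = (case i mod 6 of 0 \<Rightarrow> (1,0) | Suc 0 \<Rightarrow> (0,1) | Suc (Suc 0) \<Rightarrow> (-1,1)
           | Suc (Suc (Suc 0)) \<Rightarrow> (-1,0) | Suc (Suc (Suc (Suc 0))) \<Rightarrow> (0,-1) | _ \<Rightarrow> (1,-1))"

definition adj :: "vtx \<Rightarrow> vtx \<Rightarrow> bool" where
  "adj u v \<longleftrightarrow> (\<exists>i<6. v = padd u (dir i))"

definition adj_on :: "vtx set \<Rightarrow> (vtx \<times> vtx) set" where
  "adj_on A = {(u,v). u \<in> A \<and> v \<in> A \<and> adj u v}"

definition connected_set :: "vtx set \<Rightarrow> bool" where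
  "connected_set A \<longleftrightarrow> (\<forall>x\<in>A. \<forall>y\<in>A. (x,y) \<in> (adj_on A)\<^sup>*)"

definition comp :: "vtx set \<Rightarrow> vtx \<Rightarrow> vtx set" where
  "comp A x = {y. (x,y) \<in> (adj_on A)\<^sup>*}"

definition is_hole :: "vtx set \<Rightarrow> vtx set \<Rightarrow> bool" where
  "is_hole S H \<longleftrightarrow> (\<exists>x. x \<notin> S \<and> H = comp (- S) x \<and> finite H)"

definition translate :: "vtx \<Rightarrow> vtx set \<Rightarrow> vtx set" where
  "translate v S = padd v ` S"

definition valid_conf :: "nat \<Rightarrow> vtx set \<Rightarrow> bool" where
  "valid_conf n S \<longleftrightarrow> finite S \<and> card S = n \<and> connected_set S \<and> \<not> (\<exists>H. is_hole S H)"

text \<open>Omega: the connected hole-free configurations of n particles, up to translation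
  (each element is a translation class of vertex sets).\<close>
definition Omega :: "nat \<Rightarrow> vtx set set set" where
  "Omega n = {range (\<lambda>v. translate v S) | S. valid_conf n S}"

text \<open>Perimeter: length of the closed walk around the external boundary, with edges traversed
  twice counted twice.  The walk traverses (once each) exactly the directed edges u -> u + dir i
  between occupied vertices whose right-hand triangular face has an unoccupied apex
  u + dir (i-1) lying in the external region (i.e. not in a hole).\<close>
definition perim :: "vtx set \<Rightarrow> nat" where
  "perim S = card {(u,i). u \<in> S \<and> i < (6::nat) \<and> padd u (dir i) \<in> S
      \<and> padd u (dir (i + 5)) \<notin> S \<and> \<not> (\<exists>H. is_hole S H \<and> padd u (dir (i + 5)) \<in> H)}"

definition perim_cls :: "vtx set set \<Rightarrow> nat" where
  "perim_cls C = perim (SOME S. S \<in> C)"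

end

(*
  The 2^(n-1) staircases of n particles, lattice paths whose n - 1 steps each go east (1,0)
  or north (0,1), give pairwise distinct translation classes in Omega.  Along a staircase the
  level fst + snd increases by one per step, so a staircase meets every line of constant level
  at most once: such a line through an empty vertex escapes to infinity on one side, hence
  there are no holes.  Moreover only consecutive vertices of a staircase are lattice
  neighbours, so it contains no occupied triangle and its boundary walk traverses each of its
  n - 1 edges twice; its perimeter is 2n - 2.  Summing over staircases alone gives
  Z \<ge> 2^(n-1) lam^-(2n-2) = (sqrt 2 / lam)^(2n-2).
*)
theory Submission
  imports Defs
begin

lemma ex_less_6: "(\<exists>i<(6::nat). P i) \<longleftrightarrow> P 0 \<or> P 1 \<or> P 2 \<or> P 3 \<or> P 4 \<or> P 5"
  by (auto simp: numeral_eq_Suc less_Suc_eq)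

lemma less_6_cases: "(i::nat) < 6 \<Longrightarrow> i = 0 \<or> i = 1 \<or> i = 2 \<or> i = 3 \<or> i = 4 \<or> i = 5"
  by auto

lemma dir_values:
  "dir 0 = (1,0)" "dir 1 = (0,1)" "dir 2 = (-1,1)" "dir 3 = (-1,0)" "dir 4 = (0,-1)" "dir 5 = (1,-1)"
  by (simp_all add: dir_def)

lemma dir_nonzero: "dir i \<noteq> (0,0)"
  by (simp add: dir_def split: nat.split)

lemma padd_eq_iff: "v = padd u d \<longleftrightarrow> (fst v - fst u, snd v - snd u) = d"
  by (cases u; cases v; cases d) (auto simp: padd_def)

lemma padd_assoc: "padd (padd u v) w = padd u (padd v w)"
  by (simp add: padd_def add.assoc)

lemma adj_iff:
  "adj u v \<longleftrightarrow> (fst v - fst u, snd v - snd u) \<in> {(1,0), (0,1), (-1,1), (-1,0), (0,-1), (1,-1)}"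
  unfolding adj_def ex_less_6 padd_eq_iff dir_values by simp

lemma adj_sym: "adj u v \<Longrightarrow> adj v u"
  unfolding adj_iff by (elim insertE emptyE) (simp_all add: prod_eq_iff)

lemma sym_adj_on: "sym (adj_on A)"
  by (auto simp: sym_def adj_on_def intro: adj_sym)

lemma adj_padd_dir: "adj u (padd u (dir j))"
  unfolding adj_def by (metis dir_def mod_less_divisor mod_mod_trivial zero_less_numeral)

lemma adj_padd_dir_pred:
  assumes "i < 6"
  shows "adj (padd u (dir (i + 5))) (padd u (dir i))"
proof -
  have "padd u (dir i) = padd (padd u (dir (i + 5))) (dir (i + 1))"
    using less_6_cases[OF assms] by (auto simp: padd_def dir_def)
  then show ?thesis
    by (metis adj_padd_dir)
qed

lemma padd_dir_inj: "i < 6 \<Longrightarrow> j < 6 \<Longrightarrow> padd u (dir i) = padd u (dir j) \<Longrightarrow> i = j"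
  by (drule less_6_cases, drule less_6_cases) (auto simp: padd_def dir_def)

lemma adj_on_eq_image_dir:
  "adj_on S = (\<lambda>(u,i). (u, padd u (dir i))) ` {(u,i). u \<in> S \<and> i < (6::nat) \<and> padd u (dir i) \<in> S}"
  unfolding adj_on_def adj_def by force

lemma card_adj_on:
  "card (adj_on S) = card {(u,i). u \<in> S \<and> i < (6::nat) \<and> padd u (dir i) \<in> S}"
proof -
  have "inj_on (\<lambda>(u,i). (u, padd u (dir i))) {(u,i). u \<in> S \<and> i < (6::nat) \<and> padd u (dir i) \<in> S}"
    by (auto intro!: inj_onI dest: padd_dir_inj)
  then show ?thesis
    unfolding adj_on_eq_image_dir by (rule card_image)
qed

lemma perim_eq_card_adj_on:
  assumes "\<not> (\<exists>H. is_hole S H)"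
    and "\<And>u i. u \<in> S \<Longrightarrow> i < 6 \<Longrightarrow> padd u (dir i) \<in> S \<Longrightarrow> padd u (dir (i + 5)) \<notin> S"
  shows "perim S = card (adj_on S)"
  unfolding perim_def card_adj_on using assms by (metis (lifting))

definition level :: "vtx \<Rightarrow> int" where
  "level u = fst u + snd u"

definition staircase :: "nat \<Rightarrow> (nat \<Rightarrow> vtx) \<Rightarrow> bool" where
  "staircase n q \<longleftrightarrow>
    (\<forall>k. Suc k < n \<longrightarrow> q (Suc k) = padd (q k) (1,0) \<or> q (Suc k) = padd (q k) (0,1))"

lemma staircaseD:
  "staircase n q \<Longrightarrow> Suc k < n \<Longrightarrow> q (Suc k) = padd (q k) (1,0) \<or> q (Suc k) = padd (q k) (0,1)"
  unfolding staircase_def by blast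

lemma staircase_translate: "staircase n q \<Longrightarrow> staircase n (\<lambda>k. padd v (q k))"
  unfolding staircase_def by (auto simp: padd_assoc)

lemma staircase_level:
  assumes "staircase n q" "k < n"
  shows "level (q k) = level (q 0) + int k"
  using assms(2)
proof (induction k)
  case (Suc k)
  then show ?case
    using staircaseD[OF assms(1) Suc.prems] by (auto simp: level_def padd_def)
qed simp

lemma staircase_mono:
  assumes "staircase n q" "i \<le> j" "j < n"
  shows "fst (q i) \<le> fst (q j) \<and> snd (q i) \<le> snd (q j)"
  using assms(2,3)
proof (induction j rule: dec_induct)
  case (step j)
  then show ?case
    using staircaseD[OF assms(1) step.prems] by (auto simp: padd_def)
qed simp

lemma staircase_level_inj:
  assumes "staircase n q" "i < n" "j < n" "level (q i) = level (q j)"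
  shows "i = j"
  using assms(4) unfolding staircase_level[OF assms(1,2)] staircase_level[OF assms(1,3)] by simp

lemma inj_on_staircase: "staircase n q \<Longrightarrow> inj_on q {..<n}"
  by (auto intro!: inj_onI dest: staircase_level_inj)

lemma staircase_adj_Suc: "staircase n q \<Longrightarrow> Suc k < n \<Longrightarrow> adj (q k) (q (Suc k))"
  using staircaseD[of n q k] by (auto simp: adj_iff padd_def)

lemma staircase_adj_iff:
  assumes "staircase n q" "i < n" "j < n"
  shows "adj (q i) (q j) \<longleftrightarrow> j = Suc i \<or> i = Suc j"
proof
  have ordered: "b = Suc a" if "a \<le> b" "b < n" "adj (q a) (q b)" for a b
  proof -
    have "level (q b) - level (q a) = int b - int a"
      using staircase_level[OF assms(1), of a] staircase_level[OF assms(1), of b] that by simp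
    moreover have "fst (q a) \<le> fst (q b)" "snd (q a) \<le> snd (q b)"
      using staircase_mono[OF assms(1)] that by auto
    ultimately show ?thesis
      using that(3) unfolding adj_iff level_def by (elim insertE emptyE) (simp_all add: prod_eq_iff)
  qed
  show "j = Suc i \<or> i = Suc j" if "adj (q i) (q j)"
  proof (cases "i \<le> j")
    case True
    then show ?thesis
      using ordered assms(3) that by blast
  next
    case False
    then show ?thesis
      using ordered[of j i] assms(2) adj_sym[OF that] by simp
  qed
  show "adj (q i) (q j)" if "j = Suc i \<or> i = Suc j"
    using that staircase_adj_Suc[OF assms(1)] assms(2,3) adj_sym by blast
qed

lemma connected_staircase:
  assumes "staircase n q"
  shows "connected_set (q ` {..<n})"
proof -
  let ?E = "(adj_on (q ` {..<n}))\<^sup>*"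
  have path: "(q i, q j) \<in> ?E" if "i \<le> j" "j < n" for i j
    using that
  proof (induction j rule: dec_induct)
    case (step j)
    then have "(q j, q (Suc j)) \<in> adj_on (q ` {..<n})"
      using staircase_adj_Suc[OF assms] by (auto simp: adj_on_def)
    with step show ?case
      by (meson Suc_lessD rtrancl_into_rtrancl)
  qed simp
  have "sym ?E"
    by (simp add: sym_adj_on sym_rtrancl)
  show ?thesis
    unfolding connected_set_def
  proof (intro ballI)
    fix x y
    assume "x \<in> q ` {..<n}" "y \<in> q ` {..<n}"
    then obtain i j where "i < n" "j < n" "x = q i" "y = q j"
      by blast
    with path \<open>sym ?E\<close> show "(x, y) \<in> ?E"
      by (metis nat_le_linear symD)
  qed
qed

definition ray :: "vtx \<Rightarrow> vtx \<Rightarrow> nat \<Rightarrow> vtx" where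
  "ray x d t = (fst x + int t * fst d, snd x + int t * snd d)"

lemma ray_0 [simp]: "ray x d 0 = x"
  by (simp add: ray_def)

lemma ray_Suc: "ray x d (Suc t) = padd (ray x d t) d"
  by (simp add: ray_def padd_def algebra_simps)

lemma inj_ray: "d \<noteq> (0,0) \<Longrightarrow> inj (ray x d)"
  by (cases d) (auto simp: inj_def ray_def)

lemma infinite_comp_if_ray_avoids:
  assumes "\<And>t. ray x (dir j) t \<notin> S"
  shows "infinite (comp (- S) x)"
proof
  have "(x, ray x (dir j) t) \<in> (adj_on (- S))\<^sup>*" for t
  proof (induction t)
    case (Suc t)
    have "(ray x (dir j) t, ray x (dir j) (Suc t)) \<in> adj_on (- S)"
      using assms[of t] assms[of "Suc t"] adj_padd_dir by (simp add: adj_on_def ray_Suc)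
    with Suc show ?case
      by (rule rtrancl_into_rtrancl)
  qed simp
  then have "range (ray x (dir j)) \<subseteq> comp (- S) x"
    by (auto simp: comp_def)
  moreover assume "finite (comp (- S) x)"
  ultimately show False
    using inj_ray[OF dir_nonzero] finite_subset finite_imageD infinite_UNIV_nat by blast
qed

lemma no_hole_if_level_inj:
  assumes "\<And>u v. u \<in> S \<Longrightarrow> v \<in> S \<Longrightarrow> level u = level v \<Longrightarrow> u = v"
  shows "\<not> (\<exists>H. is_hole S H)"
proof
  assume "\<exists>H. is_hole S H"
  then obtain x where x: "x \<notin> S" "finite (comp (- S) x)"
    unfolding is_hole_def by auto
  obtain s where s: "ray x (dir 5) s \<in> S"
    using infinite_comp_if_ray_avoids x(2) by blast
  obtain t where t: "ray x (dir 2) t \<in> S"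
    using infinite_comp_if_ray_avoids x(2) by blast
  \<comment> \<open>Both rays run along the line of constant level through x.\<close>
  have "level (ray x (dir 5) s) = level (ray x (dir 2) t)"
    by (simp add: level_def ray_def dir_values)
  then have "ray x (dir 5) s = ray x (dir 2) t"
    using assms s t by blast
  then have "s = 0"
    by (simp add: ray_def dir_values)
  with s x(1) show False
    by simp
qed

lemma staircase_no_hole:
  assumes "staircase n q"
  shows "\<not> (\<exists>H. is_hole (q ` {..<n}) H)"
proof (rule no_hole_if_level_inj)
  fix u v
  assume "u \<in> q ` {..<n}" "v \<in> q ` {..<n}" "level u = level v"
  then show "u = v"
    using staircase_level_inj[OF assms] by blast
qed

lemma staircase_triangle_free:
  assumes "staircase n q" "u \<in> q ` {..<n}" "i < 6" "padd u (dir i) \<in> q ` {..<n}"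
  shows "padd u (dir (i + 5)) \<notin> q ` {..<n}"
proof
  assume "padd u (dir (i + 5)) \<in> q ` {..<n}"
  with assms(2,4) obtain a b c where abc: "a < n" "b < n" "c < n"
    and "u = q a" "padd u (dir i) = q b" "padd u (dir (i + 5)) = q c"
    by blast
  then have "adj (q a) (q b)" "adj (q a) (q c)" "adj (q c) (q b)"
    using adj_padd_dir adj_padd_dir_pred[OF assms(3)] by metis+
  then have "b = Suc a \<or> a = Suc b" "c = Suc a \<or> a = Suc c" "b = Suc c \<or> c = Suc b"
    using staircase_adj_iff[OF assms(1)] abc by blast+
  then show False
    by linarith
qed

lemma card_adj_on_staircase:
  assumes "staircase n q"
  shows "card (adj_on (q ` {..<n})) = 2 * (n - 1)"
proof -
  let ?fwd = "(\<lambda>k. (q k, q (Suc k))) ` {..<n - 1}"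
  let ?bwd = "(\<lambda>k. (q (Suc k), q k)) ` {..<n - 1}"
  have inj: "inj_on q {..<n}"
    by (rule inj_on_staircase[OF assms])
  have "adj_on (q ` {..<n}) = ?fwd \<union> ?bwd"
    using staircase_adj_iff[OF assms] by (auto simp: adj_on_def)
  moreover have "?fwd \<inter> ?bwd = {}"
  proof -
    have False if "k < n - 1" "l < n - 1" "q k = q (Suc l)" "q (Suc k) = q l" for k l
      using inj_onD[OF inj that(3)] inj_onD[OF inj that(4)] that(1,2) by force
    then show ?thesis
      by fastforce
  qed
  moreover have "card ?fwd = n - 1" "card ?bwd = n - 1"
    using inj by (auto simp: card_image inj_on_def)
  ultimately show ?thesis
    by (simp add: card_Un_disjoint)
qed

lemma perim_staircase: "staircase n q \<Longrightarrow> perim (q ` {..<n}) = 2 * (n - 1)"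
  by (simp add: perim_eq_card_adj_on staircase_no_hole staircase_triangle_free
      card_adj_on_staircase)

lemma valid_conf_staircase: "staircase n q \<Longrightarrow> valid_conf n (q ` {..<n})"
  by (simp add: valid_conf_def card_image inj_on_staircase connected_staircase staircase_no_hole)

lemma staircase_level_min:
  assumes "staircase n q" "u \<in> q ` {..<n}"
  shows "level (q 0) \<le> level u"
proof -
  obtain k where "k < n" "u = q k"
    using assms(2) by blast
  then show ?thesis
    using staircase_level[OF assms(1), of k] by simp
qed

lemma staircase_image_eq:
  assumes "staircase n q" "staircase n q'" "q ` {..<n} = q' ` {..<n}" "k < n"
  shows "q k = q' k"
proof -
  have "q 0 \<in> q' ` {..<n}" "q' 0 \<in> q ` {..<n}"
    using assms(3,4) by auto
  then have "level (q 0) = level (q' 0)"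
    using staircase_level_min assms(1-3) by (metis antisym)
  moreover obtain m where "m < n" "q k = q' m"
    using assms(3,4) by blast
  ultimately have "k = m"
    using staircase_level[OF assms(1) assms(4)] staircase_level[OF assms(2), of m] by simp
  with \<open>q k = q' m\<close> show ?thesis
    by simp
qed

lemma translate_image: "translate v (q ` K) = (\<lambda>k. padd v (q k)) ` K"
  unfolding translate_def by auto

lemma translate_origin: "translate (0,0) S = S"
proof -
  have "padd (0,0) = id"
    by (auto simp: padd_def)
  then show ?thesis
    by (simp add: translate_def)
qed

lemma translate_translate: "translate v (translate w S) = translate (padd v w) S"
proof -
  have "padd v \<circ> padd w = padd (padd v w)"
    by (auto simp: padd_def)
  then show ?thesis
    by (simp add: translate_def image_comp)
qed

lemma range_translate_translate:
  "range (\<lambda>v. translate v (translate w S)) = range (\<lambda>v. translate v S)"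
proof -
  have "translate v S = translate (padd v (- fst w, - snd w)) (translate w S)" for v
    unfolding translate_translate by (simp add: padd_def)
  then show ?thesis
    unfolding translate_translate by blast
qed

lemma adj_on_rtrancl_image_interval:
  assumes lip: "\<And>u v. adj u v \<Longrightarrow> \<bar>g v - g u\<bar> \<le> (1::int)"
    and path: "(x, y) \<in> (adj_on S)\<^sup>*" and "x \<in> S"
  shows "{g x..g y} \<subseteq> g ` S"
  using path
proof (induction rule: rtrancl_induct)
  case base
  with \<open>x \<in> S\<close> show ?case
    by auto
next
  case (step y z)
  then have "z \<in> S" "\<bar>g z - g y\<bar> \<le> 1"
    using lip by (auto simp: adj_on_def)
  then have "{g x..g z} \<subseteq> {g x..g y} \<union> {g z}"
    by auto
  with step.IH \<open>z \<in> S\<close> show ?case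
    by blast
qed

lemma connected_set_image_bounded:
  assumes lip: "\<And>u v. adj u v \<Longrightarrow> \<bar>g v - g u\<bar> \<le> (1::int)"
    and "connected_set S" "finite S"
  shows "\<exists>a. \<forall>u\<in>S. a \<le> g u \<and> g u \<le> a + int (card S)"
proof (cases "S = {}")
  case False
  let ?lo = "Min (g ` S)" and ?hi = "Max (g ` S)"
  have fin: "finite (g ` S)"
    using assms(3) by simp
  have bounds: "?lo \<le> g u \<and> g u \<le> ?hi" if "u \<in> S" for u
    using fin that by simp
  have "?lo \<in> g ` S" "?hi \<in> g ` S"
    using fin False by simp_all
  then obtain x y where x: "x \<in> S" "g x = ?lo" and y: "y \<in> S" "g y = ?hi"
    by (metis imageE)
  have "(x, y) \<in> (adj_on S)\<^sup>*"
    using assms(2) x y unfolding connected_set_def by blast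
  from adj_on_rtrancl_image_interval[of g, OF lip this x(1)] have "{?lo..?hi} \<subseteq> g ` S"
    using x y by simp
  then have "card {?lo..?hi} \<le> card S"
    using card_mono[OF fin] card_image_le[OF assms(3)] le_trans by blast
  then have "?hi \<le> ?lo + int (card S)"
    by simp
  with bounds show ?thesis
    by force
qed simp

lemma finite_Omega: "finite (Omega n)"
proof -
  let ?box = "{0..int n} \<times> {0..int n}"
  have "Omega n \<subseteq> (\<lambda>T. range (\<lambda>v. translate v T)) ` Pow ?box"
  proof
    fix C
    assume "C \<in> Omega n"
    then obtain S where S: "valid_conf n S" "C = range (\<lambda>v. translate v S)"
      unfolding Omega_def by auto
    have lip: "\<bar>fst v - fst u\<bar> \<le> 1" "\<bar>snd v - snd u\<bar> \<le> 1" if "adj u v" for u v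
      using that unfolding adj_iff by auto
    obtain a where a: "\<forall>u\<in>S. a \<le> fst u \<and> fst u \<le> a + int n"
      using connected_set_image_bounded[of fst S] lip(1) S(1) unfolding valid_conf_def by blast
    obtain b where b: "\<forall>u\<in>S. b \<le> snd u \<and> snd u \<le> b + int n"
      using connected_set_image_bounded[of snd S] lip(2) S(1) unfolding valid_conf_def by blast
    have "translate (- a, - b) S \<subseteq> ?box"
      using a b unfolding translate_def padd_def by force
    moreover have "C = range (\<lambda>v. translate v (translate (- a, - b) S))"
      using S(2) range_translate_translate by simp
    ultimately show "C \<in> (\<lambda>T. range (\<lambda>v. translate v T)) ` Pow ?box"
      by blast
  qed
  then show ?thesis
    by (rule finite_subset) simp
qed

fun word_path :: "bool list \<Rightarrow> nat \<Rightarrow> vtx" where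
  "word_path w 0 = (0,0)"
| "word_path w (Suc k) = padd (word_path w k) (if w ! k then (1,0) else (0,1))"

lemma staircase_word_path: "staircase n (word_path w)"
  unfolding staircase_def by simp

definition stair_class :: "bool list \<Rightarrow> vtx set set" where
  "stair_class w = range (\<lambda>v. translate v (word_path w ` {..<Suc (length w)}))"

lemma mem_stair_class_iff:
  "S \<in> stair_class w \<longleftrightarrow> (\<exists>v. S = (\<lambda>k. padd v (word_path w k)) ` {..<Suc (length w)})"
  unfolding stair_class_def translate_image by blast

lemma stair_class_in_Omega: "stair_class w \<in> Omega (Suc (length w))"
  unfolding Omega_def stair_class_def using valid_conf_staircase[OF staircase_word_path] by blast

lemma perim_cls_stair_class: "perim_cls (stair_class w) = 2 * length w"
proof -
  \<comment> \<open>The representative chosen by SOME is some translated staircase, whichever it is.\<close>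
  have "word_path w ` {..<Suc (length w)} \<in> stair_class w"
    unfolding stair_class_def by (metis rangeI translate_origin)
  then have "(SOME S. S \<in> stair_class w) \<in> stair_class w"
    by (rule someI)
  then show ?thesis
    unfolding perim_cls_def mem_stair_class_iff
    using perim_staircase[OF staircase_translate[OF staircase_word_path]] by auto
qed

lemma inj_on_stair_class: "inj_on stair_class {w. length w = m}"
proof (rule inj_onI)
  fix w w' :: "bool list"
  assume "w \<in> {w. length w = m}" "w' \<in> {w. length w = m}"
  then have len: "length w = m" "length w' = m"
    by simp_all
  assume "stair_class w = stair_class w'"
  moreover have "word_path w ` {..<Suc m} \<in> stair_class w"
    unfolding stair_class_def len by (metis rangeI translate_origin)
  ultimately have "word_path w ` {..<Suc m} \<in> stair_class w'"
    by simp
  then obtain v where eq: "word_path w ` {..<Suc m} = (\<lambda>k. padd v (word_path w' k)) ` {..<Suc m}"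
    unfolding mem_stair_class_iff len by blast
  have shifted: "word_path w k = padd v (word_path w' k)" if "k < Suc m" for k
    using staircase_image_eq[OF staircase_word_path staircase_translate[OF staircase_word_path] eq that] .
  then have "v = (0,0)"
    using shifted[of 0] by (simp add: padd_def)
  then have same: "word_path w k = word_path w' k" if "k \<le> m" for k
    using shifted[of k] that by (simp add: padd_def)
  show "w = w'"
  proof (rule nth_equalityI)
    fix k
    assume "k < length w"
    then have "word_path w (Suc k) = word_path w' (Suc k)" "word_path w k = word_path w' k"
      using same[of "Suc k"] same[of k] len by (simp_all del: word_path.simps)
    then show "w ! k = w' ! k"
      by (auto simp: padd_def split: if_splits)
  qed (simp add: len)
qed

lemma sqrt2_div_power_even:
  assumes "lam > 0"
  shows "(sqrt 2 / lam) ^ (2 * m) = 2 ^ m * lam powr (- real (2 * m))"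
proof -
  have "lam powr (- real (2 * m)) = inverse (lam ^ (2 * m))"
    using powr_realpow[OF assms, of "2 * m"] by (simp add: powr_minus)
  moreover have "(sqrt 2 / lam) ^ (2 * m) = 2 ^ m / lam ^ (2 * m)"
    by (simp add: power_mult power_divide)
  ultimately show ?thesis
    by (simp add: divide_inverse)
qed

theorem lemma18:
  fixes lam :: real and n :: nat
  assumes "lam > 0" and "n \<ge> 1"
  shows "(\<Sum>C\<in>Omega n. lam powr (- real (perim_cls C))) \<ge> (sqrt 2 / lam) ^ (2 * n - 2)"
proof -
  define m where "m = n - 1"
  let ?words = "{w :: bool list. length w = m}"
  let ?weight = "\<lambda>C. lam powr (- real (perim_cls C))"
  have n: "n = Suc m"
    using assms(2) m_def by simp
  have "(sqrt 2 / lam) ^ (2 * n - 2) = (\<Sum>w\<in>?words. ?weight (stair_class w))"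
    using sqrt2_div_power_even[OF assms(1)] card_lists_length_eq[of "UNIV :: bool set" m]
    by (simp add: n perim_cls_stair_class)
  also have "\<dots> = sum ?weight (stair_class ` ?words)"
    by (simp add: sum.reindex inj_on_stair_class)
  also have "\<dots> \<le> sum ?weight (Omega n)"
    using stair_class_in_Omega by (intro sum_mono2 finite_Omega) (auto simp: n)
  finally show ?thesis .
qed

end
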